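(* Let $G=x_0^4+x_1^4+x_2^4+x_3^4$ and $H=x_4^4+x_5^4+x_6^4+x_7^4+x_8^4+x_9^4$. If $K=\mathbb{Q}_2(\sqrt{2})$ with $\pi=\sqrt2$, or $K=\mathbb{Q}_2(\sqrt{10})$ with $\pi=\sqrt{10}$, then $F=G+\pi H$ has no nontrivial zero in $K^{10}$. If $K=\mathbb{Q}_2(\sqrt{-2})$ with $\pi=\sqrt{-2}$, or $K=\mathbb{Q}_2(\sqrt{-10})$ with $\pi=\sqrt{-10}$, then $F=G+(\pi+\pi^2)H$ has no nontrivial zero in $K^{10}$.
   Context: In each case $\pi$ is a uniformizer of the ring of integers of $K$. A nontrivial zero is a zero other than the all-zero vector. *)

theory Defs
  imports "HOL-Computational_Algebra.Computational_Algebra"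
begin

definition v2 :: "rat \<Rightarrow> int" where
  "v2 q = (case quotient_of q of (a, b) \<Rightarrow>
             int (multiplicity (2::int) a) - int (multiplicity (2::int) b))"

definition abs2 :: "rat \<Rightarrow> real" where
  "abs2 q = (if q = 0 then 0 else 2 powr (- real_of_int (v2 q)))"

text \<open>Q_2 is the completion of Q for abs2: its elements are represented by
  abs2-Cauchy sequences of rationals, and such a sequence represents 0 iff it is abs2-null.\<close>
definition cauchy2 :: "(nat \<Rightarrow> rat) \<Rightarrow> bool" where
  "cauchy2 X \<longleftrightarrow> (\<forall>e>0. \<exists>N. \<forall>m\<ge>N. \<forall>n\<ge>N. abs2 (X m - X n) < e)"

definition null2 :: "(nat \<Rightarrow> rat) \<Rightarrow> bool" where
  "null2 X \<longleftrightarrow> (\<forall>e>0. \<exists>N. \<forall>n\<ge>N. abs2 (X n) < e)"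

text \<open>K = Q_2(sqrt d) = Q_2[t]/(t^2 - d) (d not a square in Q_2): an element a + b sqrt d
  is a pair (a,b).  Arithmetic on pairs of rationals (the dense subfield Q(sqrt d)):\<close>
definition kadd :: "(rat \<times> rat) \<Rightarrow> (rat \<times> rat) \<Rightarrow> rat \<times> rat" where
  "kadd x y = (fst x + fst y, snd x + snd y)"

definition kmul :: "rat \<Rightarrow> (rat \<times> rat) \<Rightarrow> (rat \<times> rat) \<Rightarrow> rat \<times> rat" where
  "kmul d x y = (fst x * fst y + d * snd x * snd y, fst x * snd y + snd x * fst y)"

definition kpow4 :: "rat \<Rightarrow> (rat \<times> rat) \<Rightarrow> rat \<times> rat" where
  "kpow4 d x = (let y = kmul d x x in kmul d y y)"

definition ksum :: "(nat \<Rightarrow> rat \<times> rat) \<Rightarrow> nat set \<Rightarrow> rat \<times> rat" where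
  "ksum f A = ((\<Sum>i\<in>A. fst (f i)), (\<Sum>i\<in>A. snd (f i)))"

definition Fpoly :: "rat \<Rightarrow> (rat \<times> rat) \<Rightarrow> (nat \<Rightarrow> rat \<times> rat) \<Rightarrow> rat \<times> rat" where
  "Fpoly d c x = kadd (ksum (\<lambda>i. kpow4 d (x i)) {0..3})
                      (kmul d c (ksum (\<lambda>i. kpow4 d (x i)) {4..9}))"

definition Kcauchy :: "(nat \<Rightarrow> rat \<times> rat) \<Rightarrow> bool" where
  "Kcauchy X \<longleftrightarrow> cauchy2 (\<lambda>n. fst (X n)) \<and> cauchy2 (\<lambda>n. snd (X n))"

definition Knull :: "(nat \<Rightarrow> rat \<times> rat) \<Rightarrow> bool" where
  "Knull X \<longleftrightarrow> null2 (\<lambda>n. fst (X n)) \<and> null2 (\<lambda>n. snd (X n))"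

definition kpi :: "rat \<times> rat" where "kpi = (0, 1)"

definition has_nontrivial_zero :: "rat \<Rightarrow> (rat \<times> rat) \<Rightarrow> bool" where
  "has_nontrivial_zero d c \<longleftrightarrow>
     (\<exists>X :: nat \<Rightarrow> nat \<Rightarrow> rat \<times> rat.
        (\<forall>i<10. Kcauchy (X i)) \<and> (\<exists>i<10. \<not> Knull (X i)) \<and>
        Knull (\<lambda>n. Fpoly d c (\<lambda>i. X i n)))"

end

theory Submission
  imports Defs
begin

text \<open>
  Write \<open>x\<^sub>i = a\<^sub>i + b\<^sub>i\<surd>d\<close>. Modulo 64 the two coordinates of \<open>(a + b\<surd>d)\<^sup>4\<close> depend only
  on \<open>a\<close> and \<open>b\<close> modulo 16. If both coordinates of \<open>F(x)\<close> are divisible by 64 for integral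
  \<open>a\<^sub>i, b\<^sub>i\<close>, counting how many terms of \<open>G\<close> and of \<open>H\<close> fall into each residue class modulo
  4, 8, 16, 32 and 64 shows in turn that the \<open>a\<^sub>i\<close> with \<open>i\<close> in \<open>G\<close>, those with \<open>i\<close> in \<open>H\<close>,
  and finally all \<open>b\<^sub>i\<close> are even. For rational \<open>x\<close> with some coordinate of 2-adic absolute
  value at least \<open>e\<close>, clearing denominators and dividing by the largest common power of 2
  therefore gives \<open>|F(x)|\<^sub>2 \<ge> e\<^sup>4/32\<close> for one of the coordinates, so \<open>F\<close> stays away from 0 along
  every Cauchy sequence that is not null.
\<close>

section \<open>Fourth powers in $\mathbb{Z}[\sqrt{d}]$\<close>

definition pow4_fst :: "'a::comm_ring_1 \<Rightarrow> 'a \<Rightarrow> 'a \<Rightarrow> 'a" where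
  "pow4_fst d a b = a^4 + 6*d*a^2*b^2 + d^2*b^4"

definition pow4_snd :: "'a::comm_ring_1 \<Rightarrow> 'a \<Rightarrow> 'a \<Rightarrow> 'a" where
  "pow4_snd d a b = 4*a*b*(a^2 + d*b^2)"

lemma kpow4_eq: "kpow4 d x = (pow4_fst d (fst x) (snd x), pow4_snd d (fst x) (snd x))"
  unfolding kpow4_def kmul_def pow4_fst_def pow4_snd_def Let_def
  by (simp add: algebra_simps power2_eq_square power4_eq_xxxx)

lemma pow4_fst_mult: "pow4_fst d (t * a) (t * b) = t^4 * pow4_fst d a b"
  unfolding pow4_fst_def by (simp add: algebra_simps power_mult_distrib)

lemma pow4_snd_mult: "pow4_snd d (t * a) (t * b) = t^4 * pow4_snd d a b"
  unfolding pow4_snd_def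
  by (simp add: algebra_simps power_mult_distrib power4_eq_xxxx power2_eq_square)

lemma four_dvd_pow4_snd: "4 dvd pow4_snd d a b"
  unfolding pow4_snd_def by simp

lemma sixteen_dvd_pow4_snd:
  fixes d a b :: int
  assumes "even d" "even a"
  shows "16 dvd pow4_snd d a b"
proof -
  from assms obtain e u where "d = 2 * e" "a = 2 * u" by (auto elim!: evenE)
  then have "pow4_snd d a b = 16 * (u * b * (2 * u^2 + e * b^2))"
    unfolding pow4_snd_def by (simp add: algebra_simps power2_eq_square)
  then show ?thesis by simp
qed

lemma sixty_four_dvd_pow4_snd:
  fixes d a b :: int
  assumes "even a" "even b"
  shows "64 dvd pow4_snd d a b"
proof -
  from assms obtain u v where "a = 2 * u" "b = 2 * v" by (auto elim!: evenE)
  then have "pow4_snd d a b = 16 * pow4_snd d u v" by (simp add: pow4_snd_mult)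
  then show ?thesis using four_dvd_pow4_snd[of d u v] by auto
qed

lemma pow4_fst_mod_64: "pow4_fst (d::int) a b mod 64 = pow4_fst d (a mod 16) (b mod 16) mod 64"
proof -
  have "64 dvd pow4_fst d (a mod 16 + 16 * k) (b mod 16 + 16 * l) - pow4_fst d (a mod 16) (b mod 16)"
    for k l
    unfolding pow4_fst_def by algebra
  from this[of "a div 16" "b div 16"] show ?thesis by (simp add: mod_eq_dvd_iff)
qed

lemma pow4_snd_mod_64: "pow4_snd (d::int) a b mod 64 = pow4_snd d (a mod 16) (b mod 16) mod 64"
proof -
  have "64 dvd pow4_snd d (a mod 16 + 16 * k) (b mod 16 + 16 * l) - pow4_snd d (a mod 16) (b mod 16)"
    for k l
    unfolding pow4_snd_def by algebra
  from this[of "a div 16" "b div 16"] show ?thesis by (simp add: mod_eq_dvd_iff)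
qed

lemma d_pow4_snd_mod_64: "d * pow4_snd d a b mod 64
    = d * pow4_snd (d::int) (a mod 16) (b mod 16) mod 64"
  by (metis mod_mult_right_eq pow4_snd_mod_64)

lemma int_less_16_cases:
  "(r::int) \<in> {0..<16} \<Longrightarrow> r = 0 \<or> r = 1 \<or> r = 2 \<or> r = 3 \<or> r = 4 \<or> r = 5 \<or> r = 6 \<or> r = 7 \<or>
     r = 8 \<or> r = 9 \<or> r = 10 \<or> r = 11 \<or> r = 12 \<or> r = 13 \<or> r = 14 \<or> r = 15"
  by simp presburger

lemma even_mod_16_iff: "even ((a::int) mod 16) \<longleftrightarrow> even a"
  by (simp add: mod_mod_cancel even_iff_mod_2_eq_zero)

section \<open>Sums of fourth powers modulo 64\<close>

lemma sum_mod_cong: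
  fixes f g :: "'i \<Rightarrow> int"
  assumes "\<And>i. i \<in> S \<Longrightarrow> f i mod m = g i mod m"
  shows "(\<Sum>i\<in>S. f i) mod m = (\<Sum>i\<in>S. g i) mod m"
  by (metis (no_types, lifting) assms mod_sum_eq sum.cong)

text \<open>Each residue formula below is checked on \<open>a, b \<in> {0..<16}\<close> and then transferred by
  \<open>pow4_fst_mod_64\<close> and \<open>pow4_snd_mod_64\<close>.\<close>

lemma sum_pow4_fst_mod_16_pos:
  fixes d :: int and a b :: "'i \<Rightarrow> int"
  assumes d: "d = 2 \<or> d = 10" and S: "finite S"
  shows "(\<Sum>i\<in>S. pow4_fst d (a i) (b i)) mod 16 =
    (int (card {i\<in>S. odd (a i)}) + 4 * int (card {i\<in>S. even (a i) \<and> odd (b i)})) mod 16"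
proof -
  have table: "pow4_fst d r s mod 64 mod 16 =
      (of_bool (odd r) + 4 * of_bool (even r \<and> odd s)) mod 16"
    if "r \<in> {0..<16}" "s \<in> {0..<16}" for r s
    using int_less_16_cases[OF that(1)] int_less_16_cases[OF that(2)] d
    by (elim disjE) (simp_all add: pow4_fst_def)
  have "pow4_fst d x y mod 16 = (of_bool (odd x) + 4 * of_bool (even x \<and> odd y)) mod 16" for x y
    using table[of "x mod 16" "y mod 16"]
    by (simp add: pow4_fst_mod_64[symmetric] even_mod_16_iff mod_mod_cancel)
  then have "(\<Sum>i\<in>S. pow4_fst d (a i) (b i)) mod 16 =
      (\<Sum>i\<in>S. of_bool (odd (a i)) + 4 * of_bool (even (a i) \<and> odd (b i))) mod 16"
    by (intro sum_mod_cong)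
  with S show ?thesis by (simp add: sum.distrib sum_distrib_left[symmetric] Int_def)
qed

lemma sum_pow4_fst_mod_64_pos:
  fixes d :: int and a b :: "'i \<Rightarrow> int"
  assumes d: "d = 2 \<or> d = 10" and S: "finite S" and a: "\<forall>i\<in>S. even (a i)"
  shows "(\<Sum>i\<in>S. pow4_fst d (a i) (b i)) mod 64 =
    (d^2 * int (card {i\<in>S. odd (b i)}) + 16 * int (card {i\<in>S. even (b i) \<and> a i mod 4 = 2})) mod 64"
proof -
  have table: "pow4_fst d r s mod 64 =
      (d^2 * of_bool (odd s) + 16 * of_bool (even s \<and> r mod 4 = 2)) mod 64"
    if "r \<in> {0..<16}" "s \<in> {0..<16}" "even r" for r s
    using int_less_16_cases[OF that(1)] int_less_16_cases[OF that(2)] d that(3)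
    by (elim disjE) (simp_all add: pow4_fst_def)
  have "pow4_fst d x y mod 64 =
      (d^2 * of_bool (odd y) + 16 * of_bool (even y \<and> x mod 4 = 2)) mod 64"
    if "even x" for x y
    using table[of "x mod 16" "y mod 16"] that
    by (simp add: pow4_fst_mod_64[symmetric] even_mod_16_iff mod_mod_cancel)
  with a have "(\<Sum>i\<in>S. pow4_fst d (a i) (b i)) mod 64 =
      (\<Sum>i\<in>S. d^2 * of_bool (odd (b i)) + 16 * of_bool (even (b i) \<and> a i mod 4 = 2)) mod 64"
    by (intro sum_mod_cong) auto
  with S show ?thesis by (simp add: sum.distrib sum_distrib_left[symmetric] Int_def)
qed

lemma sum_pow4_fst_mod_16_neg:
  fixes d :: int and a b :: "'i \<Rightarrow> int"
  assumes d: "d = -2 \<or> d = -10" and S: "finite S"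
  shows "(\<Sum>i\<in>S. pow4_fst d (a i) (b i)) mod 16 =
    (int (card {i\<in>S. odd (a i)}) + 4 * int (card {i\<in>S. even (a i) \<and> odd (b i)})
      + 8 * int (card {i\<in>S. odd (a i) \<and> odd (b i)})) mod 16"
proof -
  have table: "pow4_fst d r s mod 64 mod 16 =
      (of_bool (odd r) + 4 * of_bool (even r \<and> odd s) + 8 * of_bool (odd r \<and> odd s)) mod 16"
    if "r \<in> {0..<16}" "s \<in> {0..<16}" for r s
    using int_less_16_cases[OF that(1)] int_less_16_cases[OF that(2)] d
    by (elim disjE) (simp_all add: pow4_fst_def)
  have "pow4_fst d x y mod 16 =
      (of_bool (odd x) + 4 * of_bool (even x \<and> odd y) + 8 * of_bool (odd x \<and> odd y)) mod 16" for x y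
    using table[of "x mod 16" "y mod 16"]
    by (simp add: pow4_fst_mod_64[symmetric] even_mod_16_iff mod_mod_cancel)
  then have "(\<Sum>i\<in>S. pow4_fst d (a i) (b i)) mod 16 = (\<Sum>i\<in>S. of_bool (odd (a i))
      + 4 * of_bool (even (a i) \<and> odd (b i)) + 8 * of_bool (odd (a i) \<and> odd (b i))) mod 16"
    by (intro sum_mod_cong)
  with S show ?thesis by (simp add: sum.distrib sum_distrib_left[symmetric] Int_def)
qed

lemma sum_pow4_snd_mod_16_neg:
  fixes d :: int and a b :: "'i \<Rightarrow> int"
  assumes d: "d = -2 \<or> d = -10" and S: "finite S"
  shows "d * (\<Sum>i\<in>S. pow4_snd d (a i) (b i)) mod 16 =
    8 * int (card {i\<in>S. odd (a i) \<and> odd (b i)}) mod 16"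
proof -
  have table: "d * pow4_snd d r s mod 64 mod 16 = 8 * of_bool (odd r \<and> odd s) mod 16"
    if "r \<in> {0..<16}" "s \<in> {0..<16}" for r s
    using int_less_16_cases[OF that(1)] int_less_16_cases[OF that(2)] d
    by (elim disjE) (simp_all add: pow4_snd_def)
  have "d * pow4_snd d x y mod 16 = 8 * of_bool (odd x \<and> odd y) mod 16" for x y
    using table[of "x mod 16" "y mod 16"]
    by (simp add: d_pow4_snd_mod_64[symmetric] even_mod_16_iff mod_mod_cancel)
  then have "(\<Sum>i\<in>S. d * pow4_snd d (a i) (b i)) mod 16 =
      (\<Sum>i\<in>S. 8 * of_bool (odd (a i) \<and> odd (b i))) mod 16"
    by (intro sum_mod_cong)
  with S show ?thesis by (simp add: sum_distrib_left[symmetric] Int_def)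
qed

lemma sum_pow4_fst_mod_64_neg:
  fixes d :: int and a b :: "'i \<Rightarrow> int"
  assumes d: "d = -2 \<or> d = -10" and S: "finite S" and a: "\<forall>i\<in>S. even (a i)"
  shows "(\<Sum>i\<in>S. pow4_fst d (a i) (b i)) mod 64 =
    (d^2 * int (card {i\<in>S. odd (b i)}) + 16 * int (card {i\<in>S. even (b i) \<and> a i mod 4 = 2})
      + 32 * int (card {i\<in>S. odd (b i) \<and> a i mod 4 = 2})) mod 64"
proof -
  have table: "pow4_fst d r s mod 64 = (d^2 * of_bool (odd s) + 16 * of_bool (even s \<and> r mod 4 = 2)
      + 32 * of_bool (odd s \<and> r mod 4 = 2)) mod 64"
    if "r \<in> {0..<16}" "s \<in> {0..<16}" "even r" for r s
    using int_less_16_cases[OF that(1)] int_less_16_cases[OF that(2)] d that(3)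
    by (elim disjE) (simp_all add: pow4_fst_def)
  have "pow4_fst d x y mod 64 = (d^2 * of_bool (odd y) + 16 * of_bool (even y \<and> x mod 4 = 2)
      + 32 * of_bool (odd y \<and> x mod 4 = 2)) mod 64" if "even x" for x y
    using table[of "x mod 16" "y mod 16"] that
    by (simp add: pow4_fst_mod_64[symmetric] even_mod_16_iff mod_mod_cancel)
  with a have "(\<Sum>i\<in>S. pow4_fst d (a i) (b i)) mod 64 = (\<Sum>i\<in>S. d^2 * of_bool (odd (b i))
      + 16 * of_bool (even (b i) \<and> a i mod 4 = 2) + 32 * of_bool (odd (b i) \<and> a i mod 4 = 2)) mod 64"
    by (intro sum_mod_cong) auto
  with S show ?thesis by (simp add: sum.distrib sum_distrib_left[symmetric] Int_def)
qed

lemma sum_pow4_snd_mod_64_neg: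
  fixes d :: int and a b :: "'i \<Rightarrow> int"
  assumes d: "d = -2 \<or> d = -10" and S: "finite S" and a: "\<forall>i\<in>S. even (a i)"
  shows "d * (\<Sum>i\<in>S. pow4_snd d (a i) (b i)) mod 64 =
    32 * int (card {i\<in>S. odd (b i) \<and> a i mod 4 = 2}) mod 64"
proof -
  have table: "d * pow4_snd d r s mod 64 = 32 * of_bool (odd s \<and> r mod 4 = 2) mod 64"
    if "r \<in> {0..<16}" "s \<in> {0..<16}" "even r" for r s
    using int_less_16_cases[OF that(1)] int_less_16_cases[OF that(2)] d that(3)
    by (elim disjE) (simp_all add: pow4_snd_def)
  have "d * pow4_snd d x y mod 64 = 32 * of_bool (odd y \<and> x mod 4 = 2) mod 64" if "even x" for x y
    using table[of "x mod 16" "y mod 16"] that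
    by (simp add: d_pow4_snd_mod_64[symmetric] even_mod_16_iff mod_mod_cancel)
  with a have "(\<Sum>i\<in>S. d * pow4_snd d (a i) (b i)) mod 64 =
      (\<Sum>i\<in>S. 32 * of_bool (odd (b i) \<and> a i mod 4 = 2)) mod 64"
    by (intro sum_mod_cong) auto
  with S show ?thesis by (simp add: sum_distrib_left[symmetric] Int_def)
qed

lemma card_filter_disjoint_le:
  assumes "finite S" "\<And>i. i \<in> S \<Longrightarrow> \<not> (P i \<and> Q i)"
  shows "card {i\<in>S. P i} + card {i\<in>S. Q i} \<le> card S"
proof -
  have "card {i\<in>S. P i} + card {i\<in>S. Q i} = card ({i\<in>S. P i} \<union> {i\<in>S. Q i})"
    using assms by (intro card_Un_disjoint[symmetric]) auto
  also have "\<dots> \<le> card S" using assms(1) by (intro card_mono) auto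
  finally show ?thesis .
qed

lemma nat_le_6_cases: "(n::nat) \<le> 6 \<Longrightarrow> n = 0 \<or> n = 1 \<or> n = 2 \<or> n = 3 \<or> n = 4 \<or> n = 5 \<or> n = 6"
  by presburger

lemma mod_eq_0_if_dvd_mod_eq:
  fixes x y :: int
  assumes "m dvd x" "x mod n = y mod n" "m dvd n"
  shows "y mod m = 0"
  by (metis assms dvd_imp_mod_0 mod_mod_cancel)

lemma count_mod_4:
  assumes "(int m + 4 * int n + 8 * k) mod 4 = 0" "m \<le> 6"
  shows "m = 0 \<or> m = 4"
proof -
  have "int m + 4 * int n + 8 * k = int m + 4 * (int n + 2 * k)" by simp
  then have "int m mod 4 = 0" using assms(1) by (metis mod_mult_self2)
  then show ?thesis using nat_le_6_cases[OF assms(2)] by (elim disjE) simp_all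
qed

lemma count_mod_8:
  assumes "(int m + 4 * int n + 8 * k) mod 8 = 0" "m + n \<le> 4"
  shows "m = 0"
proof -
  have r: "(int m + 4 * int n) mod 8 = 0" using assms(1) by simp
  have m: "m \<le> 6" and n: "n \<le> 6" using assms(2) by simp_all
  show ?thesis using r assms(2) nat_le_6_cases[OF m] nat_le_6_cases[OF n] by (elim disjE) simp_all
qed

lemma count_mod_16:
  assumes "(int m + 4 * int n + 16 * k) mod 16 = 0" "m = 0 \<or> m = 4" "m + n \<le> 6"
  shows "m = 0"
proof -
  have r: "(int m + 4 * int n) mod 16 = 0" using assms(1) by simp
  have n: "n \<le> 6" using assms(3) by simp
  show ?thesis using r assms(2,3) nat_le_6_cases[OF n] by (elim disjE) simp_all
qed

lemma count_mod_32:
  fixes d :: int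
  assumes "d \<in> {2, 10, -2, -10}" "(d^2 * int q + 16 * int y + 32 * k) mod 32 = 0" "y + q \<le> 4"
  shows "q = 0"
proof -
  have d: "d = 2 \<or> d = 10 \<or> d = -2 \<or> d = -10" using assms(1) by simp
  have q: "q \<le> 6" and y: "y \<le> 6" using assms(3) by simp_all
  show ?thesis using assms(2,3) d nat_le_6_cases[OF q] nat_le_6_cases[OF y] by (elim disjE) simp_all
qed

lemma count_mod_64:
  fixes d :: int
  assumes "d \<in> {2, 10, -2, -10}" "(d^2 * int q + 16 * int y + 64 * k) mod 64 = 0" "y + q \<le> 6"
  shows "q = 0"
proof -
  have d: "d = 2 \<or> d = 10 \<or> d = -2 \<or> d = -10" using assms(1) by simp
  have q: "q \<le> 6" and y: "y \<le> 6" using assms(3) by simp_all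
  show ?thesis using assms(2,3) d nat_le_6_cases[OF q] nat_le_6_cases[OF y] by (elim disjE) simp_all
qed

section \<open>The form at integral points\<close>

definition F_fst :: "'a::comm_ring_1 \<Rightarrow> 'a \<Rightarrow> 'a \<Rightarrow> (nat \<Rightarrow> 'a) \<Rightarrow> (nat \<Rightarrow> 'a) \<Rightarrow> 'a" where
  "F_fst d c1 c2 a b = (\<Sum>i\<in>{0..3}. pow4_fst d (a i) (b i))
     + c1 * (\<Sum>i\<in>{4..9}. pow4_fst d (a i) (b i)) + d * c2 * (\<Sum>i\<in>{4..9}. pow4_snd d (a i) (b i))"

definition F_snd :: "'a::comm_ring_1 \<Rightarrow> 'a \<Rightarrow> 'a \<Rightarrow> (nat \<Rightarrow> 'a) \<Rightarrow> (nat \<Rightarrow> 'a) \<Rightarrow> 'a" where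
  "F_snd d c1 c2 a b = (\<Sum>i\<in>{0..3}. pow4_snd d (a i) (b i))
     + c1 * (\<Sum>i\<in>{4..9}. pow4_snd d (a i) (b i)) + c2 * (\<Sum>i\<in>{4..9}. pow4_fst d (a i) (b i))"

lemma F_fst_mult: "F_fst d c1 c2 (\<lambda>i. t * a i) (\<lambda>i. t * b i) = t^4 * F_fst d c1 c2 a b"
  unfolding F_fst_def pow4_fst_mult pow4_snd_mult by (simp add: sum_distrib_left algebra_simps)

lemma F_snd_mult: "F_snd d c1 c2 (\<lambda>i. t * a i) (\<lambda>i. t * b i) = t^4 * F_snd d c1 c2 a b"
  unfolding F_snd_def pow4_fst_mult pow4_snd_mult by (simp add: sum_distrib_left algebra_simps)

lemma F_fst_cong:
  "(\<And>i. i < 10 \<Longrightarrow> a i = a' i \<and> b i = b' i) \<Longrightarrow> F_fst d c1 c2 a b = F_fst d c1 c2 a' b'"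
  unfolding F_fst_def
  by (intro arg_cong2[where f = "(+)"] arg_cong2[where f = "(*)"] sum.cong refl) auto

lemma F_snd_cong:
  "(\<And>i. i < 10 \<Longrightarrow> a i = a' i \<and> b i = b' i) \<Longrightarrow> F_snd d c1 c2 a b = F_snd d c1 c2 a' b'"
  unfolding F_snd_def
  by (intro arg_cong2[where f = "(+)"] arg_cong2[where f = "(*)"] sum.cong refl) auto

lemma of_int_F_fst:
  "of_int (F_fst d c1 c2 a b)
      = F_fst (of_int d) (of_int c1) (of_int c2) (\<lambda>i. of_int (a i)) (\<lambda>i. of_int (b i))"
  unfolding F_fst_def pow4_fst_def pow4_snd_def by simp

lemma of_int_F_snd:
  "of_int (F_snd d c1 c2 a b)
      = F_snd (of_int d) (of_int c1) (of_int c2) (\<lambda>i. of_int (a i)) (\<lambda>i. of_int (b i))"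
  unfolding F_snd_def pow4_fst_def pow4_snd_def by simp

lemma Fpoly_eq:
  "Fpoly d (c1, c2) x =
    (F_fst d c1 c2 (\<lambda>i. fst (x i)) (\<lambda>i. snd (x i)), F_snd d c1 c2 (\<lambda>i. fst (x i)) (\<lambda>i. snd (x i)))"
  unfolding Fpoly_def F_fst_def F_snd_def kadd_def kmul_def ksum_def kpow4_eq
  by (simp add: algebra_simps)

lemma Fpoly_scaled_integral:
  fixes x :: "nat \<Rightarrow> rat \<times> rat" and d c1 c2 D :: int and a b :: "nat \<Rightarrow> int"
  assumes "\<And>i. i < 10 \<Longrightarrow>
    of_int D * fst (x i) = of_int (2^k * a i) \<and> of_int D * snd (x i) = of_int (2^k * b i)"
  shows "of_int D^4 * fst (Fpoly (of_int d) (of_int c1, of_int c2) x) =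
      of_int ((2^k)^4 * F_fst d c1 c2 a b)"
    and "of_int D^4 * snd (Fpoly (of_int d) (of_int c1, of_int c2) x) =
      of_int ((2^k)^4 * F_snd d c1 c2 a b)"
proof -
  let ?xa = "\<lambda>i. fst (x i)" and ?xb = "\<lambda>i. snd (x i)"
  let ?a = "\<lambda>i. of_int (2^k * a i) :: rat" and ?b = "\<lambda>i. of_int (2^k * b i) :: rat"
  have "of_int D^4 * F_fst (of_int d) (of_int c1) (of_int c2) ?xa ?xb
      = F_fst (of_int d) (of_int c1) (of_int c2) ?a ?b"
    unfolding F_fst_mult[symmetric] by (rule F_fst_cong) (use assms in auto)
  moreover have "of_int D^4 * F_snd (of_int d) (of_int c1) (of_int c2) ?xa ?xb
      = F_snd (of_int d) (of_int c1) (of_int c2) ?a ?b"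
    unfolding F_snd_mult[symmetric] by (rule F_snd_cong) (use assms in auto)
  ultimately show
    "of_int D^4 * fst (Fpoly (of_int d) (of_int c1, of_int c2) x) =
      of_int ((2^k)^4 * F_fst d c1 c2 a b)"
    "of_int D^4 * snd (Fpoly (of_int d) (of_int c1, of_int c2) x) =
      of_int ((2^k)^4 * F_snd d c1 c2 a b)"
    by (simp_all add: Fpoly_eq of_int_F_fst of_int_F_snd F_fst_mult F_snd_mult)
qed

lemma F_pos_first_coords_even:
  fixes d :: int and a b :: "nat \<Rightarrow> int"
  assumes d: "d = 2 \<or> d = 10" and F: "64 dvd F_fst d 0 1 a b" "64 dvd F_snd d 0 1 a b"
  shows "\<forall>i\<in>{0..9}. even (a i)"
proof -
  let ?A = "\<lambda>S. \<Sum>i\<in>S. pow4_fst d (a i) (b i)" and ?B = "\<lambda>S. \<Sum>i\<in>S. pow4_snd d (a i) (b i)"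
  let ?odd = "\<lambda>S. card {i\<in>S. odd (a i)}" and ?eo = "\<lambda>S. card {i\<in>S. even (a i) \<and> odd (b i)}"
  have F1: "64 dvd ?A {0..3} + d * ?B {4..9}" and F2: "64 dvd ?B {0..3} + ?A {4..9}"
    using F by (simp_all add: F_fst_def F_snd_def)
  have A: "?A S mod 16 = (int (?odd S) + 4 * int (?eo S)) mod 16" if "finite S" for S
    using sum_pow4_fst_mod_16_pos[OF d that] .
  have count: "?odd S + ?eo S \<le> card S" if "finite S" for S
    using that by (intro card_filter_disjoint_le) auto
  have B4: "4 dvd ?B S" for S
    by (intro dvd_sum four_dvd_pow4_snd)
  have "4 dvd ?A {4..9}"
    using dvd_trans[of 4 64, OF _ F2] B4 by (simp add: dvd_add_right_iff)
  then have "(int (?odd {4..9}) + 4 * int (?eo {4..9})) mod 4 = 0"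
    by (rule mod_eq_0_if_dvd_mod_eq[OF _ A]) simp_all
  then have odd_H: "?odd {4..9} = 0 \<or> ?odd {4..9} = 4"
    using count[of "{4..9}"] by (intro count_mod_4[where k = 0]) auto
  have "8 dvd d * ?B {4..9}"
    using d B4[of "{4..9}"] by (auto intro: mult_dvd_mono[of 2 _ 4, simplified])
  then have "8 dvd ?A {0..3}"
    using dvd_trans[of 8 64, OF _ F1] by (simp add: dvd_add_left_iff)
  then have "(int (?odd {0..3}) + 4 * int (?eo {0..3})) mod 8 = 0"
    by (rule mod_eq_0_if_dvd_mod_eq[OF _ A]) simp_all
  then have "?odd {0..3} = 0"
    using count[of "{0..3}"] by (intro count_mod_8[where k = 0]) auto
  then have even_G: "\<forall>i\<in>{0..3}. even (a i)" by simp
  then have "16 dvd ?B {0..3}"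
    by (intro dvd_sum sixteen_dvd_pow4_snd) (use d in auto)
  then have "16 dvd ?A {4..9}"
    using dvd_trans[of 16 64, OF _ F2] by (simp add: dvd_add_right_iff)
  then have "(int (?odd {4..9}) + 4 * int (?eo {4..9})) mod 16 = 0"
    by (rule mod_eq_0_if_dvd_mod_eq[OF _ A]) simp_all
  then have "?odd {4..9} = 0"
    using count[of "{4..9}"] odd_H by (intro count_mod_16[where k = 0]) auto
  with even_G show ?thesis by auto
qed

lemma F_pos_second_coords_even:
  fixes d :: int and a b :: "nat \<Rightarrow> int"
  assumes d: "d = 2 \<or> d = 10" and F: "64 dvd F_fst d 0 1 a b" "64 dvd F_snd d 0 1 a b"
    and a_even: "\<forall>i\<in>{0..9}. even (a i)"
  shows "\<forall>i\<in>{0..9}. even (b i)"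
proof -
  let ?A = "\<lambda>S. \<Sum>i\<in>S. pow4_fst d (a i) (b i)" and ?B = "\<lambda>S. \<Sum>i\<in>S. pow4_snd d (a i) (b i)"
  let ?ob = "\<lambda>S. card {i\<in>S. odd (b i)}" and ?e2 = "\<lambda>S. card {i\<in>S. even (b i) \<and> a i mod 4 = 2}"
  have F1: "64 dvd ?A {0..3} + d * ?B {4..9}" and F2: "64 dvd ?B {0..3} + ?A {4..9}"
    using F by (simp_all add: F_fst_def F_snd_def)
  have A: "?A S mod 64 = (d^2 * int (?ob S) + 16 * int (?e2 S)) mod 64" if "S \<subseteq> {0..9}" for S
    using a_even that by (intro sum_pow4_fst_mod_64_pos[OF d]) (auto intro: finite_subset)
  have count: "?e2 S + ?ob S \<le> card S" if "finite S" for S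
    using that by (intro card_filter_disjoint_le) auto
  have d_dvd: "d \<in> {2, 10, -2, -10}" using d by auto
  have "16 dvd ?B {4..9}"
    by (intro dvd_sum sixteen_dvd_pow4_snd) (use d a_even in auto)
  then have "32 dvd d * ?B {4..9}"
    using d by (auto intro: mult_dvd_mono[of 2 _ 16, simplified])
  then have "32 dvd ?A {0..3}"
    using dvd_trans[of 32 64, OF _ F1] by (simp add: dvd_add_left_iff)
  then have "(d^2 * int (?ob {0..3}) + 16 * int (?e2 {0..3})) mod 32 = 0"
    by (rule mod_eq_0_if_dvd_mod_eq[OF _ A]) simp_all
  then have "?ob {0..3} = 0"
    using count[of "{0..3}"] by (intro count_mod_32[OF d_dvd, where k = 0]) auto
  then have "\<forall>i\<in>{0..3}. even (b i)" by simp
  then have "64 dvd ?B {0..3}"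
    by (intro dvd_sum sixty_four_dvd_pow4_snd) (use a_even in auto)
  then have "64 dvd ?A {4..9}"
    using F2 by (simp add: dvd_add_right_iff)
  then have "(d^2 * int (?ob {4..9}) + 16 * int (?e2 {4..9})) mod 64 = 0"
    by (rule mod_eq_0_if_dvd_mod_eq[OF _ A]) simp_all
  then have "?ob {4..9} = 0"
    using count[of "{4..9}"] by (intro count_mod_64[OF d_dvd, where k = 0]) auto
  with \<open>\<forall>i\<in>{0..3}. even (b i)\<close> show ?thesis by auto
qed

lemma F_pos_coords_even:
  fixes d :: int and a b :: "nat \<Rightarrow> int"
  assumes "d = 2 \<or> d = 10" "64 dvd F_fst d 0 1 a b" "64 dvd F_snd d 0 1 a b"
  shows "\<forall>i<10. even (a i) \<and> even (b i)"
  using F_pos_first_coords_even[OF assms] F_pos_second_coords_even[OF assms] by auto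

lemma F_neg_first_coords_even:
  fixes d :: int and a b :: "nat \<Rightarrow> int"
  assumes d: "d = -2 \<or> d = -10" and F: "64 dvd F_fst d d 1 a b" "64 dvd F_snd d d 1 a b"
  shows "\<forall>i\<in>{0..9}. even (a i)"
proof -
  let ?A = "\<lambda>S. \<Sum>i\<in>S. pow4_fst d (a i) (b i)" and ?B = "\<lambda>S. \<Sum>i\<in>S. pow4_snd d (a i) (b i)"
  let ?odd = "\<lambda>S. card {i\<in>S. odd (a i)}" and ?eo = "\<lambda>S. card {i\<in>S. even (a i) \<and> odd (b i)}"
    and ?oo = "\<lambda>S. card {i\<in>S. odd (a i) \<and> odd (b i)}"
  have F1: "64 dvd ?A {0..3} + d * ?A {4..9} + d * ?B {4..9}"
    and F2: "64 dvd ?B {0..3} + d * ?B {4..9} + ?A {4..9}"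
    using F by (simp_all add: F_fst_def F_snd_def)
  have A: "?A S mod 16 = (int (?odd S) + 4 * int (?eo S) + 8 * int (?oo S)) mod 16"
    if "finite S" for S
    using sum_pow4_fst_mod_16_neg[OF d that] .
  have dB: "d * ?B S mod 16 = 8 * int (?oo S) mod 16" if "finite S" for S
    using sum_pow4_snd_mod_16_neg[OF d that] .
  have count: "?odd S + ?eo S \<le> card S" if "finite S" for S
    using that by (intro card_filter_disjoint_le) auto
  have B4: "4 dvd ?B S" for S
    by (intro dvd_sum four_dvd_pow4_snd)
  have "4 dvd ?B {0..3} + d * ?B {4..9}"
    using B4 by simp
  then have "4 dvd ?A {4..9}"
    using dvd_trans[of 4 64, OF _ F2] by (simp add: dvd_add_right_iff)
  then have "(int (?odd {4..9}) + 4 * int (?eo {4..9}) + 8 * int (?oo {4..9})) mod 4 = 0"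
    by (rule mod_eq_0_if_dvd_mod_eq[OF _ A]) simp_all
  then have odd_H: "?odd {4..9} = 0 \<or> ?odd {4..9} = 4"
    using count[of "{4..9}"] by (intro count_mod_4) auto
  have "8 dvd d * ?A {4..9}"
    using d \<open>4 dvd ?A {4..9}\<close> by (auto intro: mult_dvd_mono[of 2 _ 4, simplified])
  moreover have "8 dvd d * ?B {4..9}"
    using d B4[of "{4..9}"] by (auto intro: mult_dvd_mono[of 2 _ 4, simplified])
  ultimately have "8 dvd ?A {0..3}"
    using dvd_trans[of 8 64, OF _ F1] by (simp add: dvd_add_left_iff add.assoc)
  then have "(int (?odd {0..3}) + 4 * int (?eo {0..3}) + 8 * int (?oo {0..3})) mod 8 = 0"
    by (rule mod_eq_0_if_dvd_mod_eq[OF _ A]) simp_all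
  then have "?odd {0..3} = 0"
    using count[of "{0..3}"] by (intro count_mod_8) auto
  then have even_G: "\<forall>i\<in>{0..3}. even (a i)" by simp
  then have "16 dvd ?B {0..3}"
    by (intro dvd_sum sixteen_dvd_pow4_snd) (use d in auto)
  then have "(?B {0..3} + d * ?B {4..9} + ?A {4..9}) mod 16
      = (0 + 8 * int (?oo {4..9})
            + (int (?odd {4..9}) + 4 * int (?eo {4..9}) + 8 * int (?oo {4..9}))) mod 16"
    by (intro mod_add_cong dB A) auto
  also have "\<dots> = (int (?odd {4..9}) + 4 * int (?eo {4..9}) + 16 * int (?oo {4..9})) mod 16"
    by (rule arg_cong[where f = "\<lambda>t. t mod 16"]) linarith
  finally have "(int (?odd {4..9}) + 4 * int (?eo {4..9}) + 16 * int (?oo {4..9})) mod 16 = 0"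
    using dvd_trans[of 16 64, OF _ F2] by simp
  then have "?odd {4..9} = 0"
    using count[of "{4..9}"] odd_H by (intro count_mod_16) auto
  with even_G show ?thesis by auto
qed

lemma F_neg_second_coords_even:
  fixes d :: int and a b :: "nat \<Rightarrow> int"
  assumes d: "d = -2 \<or> d = -10" and F: "64 dvd F_fst d d 1 a b" "64 dvd F_snd d d 1 a b"
    and a_even: "\<forall>i\<in>{0..9}. even (a i)"
  shows "\<forall>i\<in>{0..9}. even (b i)"
proof -
  let ?A = "\<lambda>S. \<Sum>i\<in>S. pow4_fst d (a i) (b i)" and ?B = "\<lambda>S. \<Sum>i\<in>S. pow4_snd d (a i) (b i)"
  let ?ob = "\<lambda>S. card {i\<in>S. odd (b i)}" and ?e2 = "\<lambda>S. card {i\<in>S. even (b i) \<and> a i mod 4 = 2}"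
    and ?o2 = "\<lambda>S. card {i\<in>S. odd (b i) \<and> a i mod 4 = 2}"
  have F1: "64 dvd ?A {0..3} + d * ?A {4..9} + d * ?B {4..9}"
    and F2: "64 dvd ?B {0..3} + d * ?B {4..9} + ?A {4..9}"
    using F by (simp_all add: F_fst_def F_snd_def)
  have A: "?A S mod 64 = (d^2 * int (?ob S) + 16 * int (?e2 S) + 32 * int (?o2 S)) mod 64"
    if "S \<subseteq> {0..9}" for S
    using a_even that by (intro sum_pow4_fst_mod_64_neg[OF d]) (auto intro: finite_subset)
  have dB: "d * ?B S mod 64 = 32 * int (?o2 S) mod 64" if "S \<subseteq> {0..9}" for S
    using a_even that by (intro sum_pow4_snd_mod_64_neg[OF d]) (auto intro: finite_subset)
  have count: "?e2 S + ?ob S \<le> card S" if "finite S" for S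
    using that by (intro card_filter_disjoint_le) auto
  have d_dvd: "d \<in> {2, 10, -2, -10}" using d by auto
  have B16: "16 dvd ?B S" if "S \<subseteq> {0..9}" for S
    by (intro dvd_sum sixteen_dvd_pow4_snd) (use d a_even that in auto)
  then have "16 dvd ?B {0..3} + d * ?B {4..9}" by simp
  then have "16 dvd ?A {4..9}"
    using dvd_trans[of 16 64, OF _ F2] by (simp add: dvd_add_right_iff)
  then have "32 dvd d * ?A {4..9} + d * ?B {4..9}"
    using d B16[of "{4..9}"] by (auto intro!: dvd_add intro: mult_dvd_mono[of 2 _ 16, simplified])
  then have "32 dvd ?A {0..3}"
    using dvd_trans[of 32 64, OF _ F1] by (simp add: dvd_add_left_iff add.assoc)
  then have "(d^2 * int (?ob {0..3}) + 16 * int (?e2 {0..3}) + 32 * int (?o2 {0..3})) mod 32 = 0"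
    by (rule mod_eq_0_if_dvd_mod_eq[OF _ A]) simp_all
  then have "?ob {0..3} = 0"
    using count[of "{0..3}"] by (intro count_mod_32[OF d_dvd]) auto
  then have "\<forall>i\<in>{0..3}. even (b i)" by simp
  then have "64 dvd ?B {0..3}"
    by (intro dvd_sum sixty_four_dvd_pow4_snd) (use a_even in auto)
  then have "(?B {0..3} + d * ?B {4..9} + ?A {4..9}) mod 64 = (0 + 32 * int (?o2 {4..9})
      + (d^2 * int (?ob {4..9}) + 16 * int (?e2 {4..9}) + 32 * int (?o2 {4..9}))) mod 64"
    by (intro mod_add_cong dB A) auto
  also have "\<dots> = (d^2 * int (?ob {4..9}) + 16 * int (?e2 {4..9}) + 64 * int (?o2 {4..9})) mod 64"
    by (rule arg_cong[where f = "\<lambda>t. t mod 64"]) linarith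
  finally have "(d^2 * int (?ob {4..9}) + 16 * int (?e2 {4..9}) + 64 * int (?o2 {4..9})) mod 64 = 0"
    using F2 by simp
  then have "?ob {4..9} = 0"
    using count[of "{4..9}"] by (intro count_mod_64[OF d_dvd]) auto
  with \<open>\<forall>i\<in>{0..3}. even (b i)\<close> show ?thesis by auto
qed

lemma F_neg_coords_even:
  fixes d :: int and a b :: "nat \<Rightarrow> int"
  assumes "d = -2 \<or> d = -10" "64 dvd F_fst d d 1 a b" "64 dvd F_snd d d 1 a b"
  shows "\<forall>i<10. even (a i) \<and> even (b i)"
  using F_neg_first_coords_even[OF assms] F_neg_second_coords_even[OF assms] by auto

section \<open>The 2-adic absolute value\<close>

lemma v2_of_int_div:
  assumes a: "(a::int) \<noteq> 0" and b: "b > 0"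
  shows "v2 (of_int a / of_int b) = int (multiplicity 2 a) - int (multiplicity 2 b)"
proof -
  obtain n m where qm: "quotient_of (of_int a / of_int b) = (n, m)"
    by (cases "quotient_of (of_int a / of_int b)")
  have m: "m > 0" using quotient_of_denom_pos[OF qm] .
  have "(of_int a / of_int b :: rat) = of_int n / of_int m" using quotient_of_div[OF qm] .
  then have "of_int a * of_int m = (of_int n * of_int b :: rat)"
    using b m by (simp add: field_simps)
  then have ab: "a * m = n * b" by (metis of_int_eq_iff of_int_mult)
  have n: "n \<noteq> 0" using ab a m b by auto
  have "multiplicity 2 (a * m) = multiplicity 2 (n * b)" using ab by simp
  then have "multiplicity 2 a + multiplicity (2::int) m = multiplicity 2 n + multiplicity 2 b"
    using prime_elem_multiplicity_mult_distrib[of "2::int"] a n m b by simp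
  then show ?thesis unfolding v2_def qm by simp
qed

lemma v2_mult:
  assumes p: "(p::rat) \<noteq> 0" and q: "q \<noteq> 0"
  shows "v2 (p * q) = v2 p + v2 q"
proof -
  obtain a b where ab: "quotient_of p = (a, b)" by (cases "quotient_of p")
  obtain c e where ce: "quotient_of q = (c, e)" by (cases "quotient_of q")
  have b: "b > 0" and e: "e > 0" using quotient_of_denom_pos ab ce by blast+
  have pe: "p = of_int a / of_int b" and qe: "q = of_int c / of_int e"
    using quotient_of_div ab ce by blast+
  have a: "a \<noteq> 0" and c: "c \<noteq> 0" using p q pe qe by auto
  have "v2 (p * q) = v2 (of_int (a * c) / of_int (b * e))" using pe qe by simp
  also have "\<dots> = int (multiplicity 2 (a * c)) - int (multiplicity 2 (b * e))"
    using a c b e by (intro v2_of_int_div) auto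
  also have "\<dots> =
      (int (multiplicity 2 a) - int (multiplicity 2 b)) + (int (multiplicity 2 c) - int (multiplicity 2 e))"
    using prime_elem_multiplicity_mult_distrib[of "2::int"] a c b e by simp
  also have "\<dots> = v2 p + v2 q"
    using v2_of_int_div[OF a b] v2_of_int_div[OF c e] pe qe by simp
  finally show ?thesis .
qed

lemma abs2_nonneg: "abs2 p \<ge> 0"
  by (simp add: abs2_def)

lemma abs2_pos: "p \<noteq> 0 \<Longrightarrow> abs2 p > 0"
  by (simp add: abs2_def)

lemma abs2_mult: "abs2 (p * q) = abs2 p * abs2 q"
  by (cases "p = 0 \<or> q = 0") (auto simp: abs2_def v2_mult powr_add[symmetric] algebra_simps)

lemma abs2_power: "abs2 (p ^ k) = abs2 p ^ k"
proof (induction k)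
  case 0
  show ?case using v2_of_int_div[of 1 1] by (simp add: abs2_def)
next
  case (Suc k)
  then show ?case by (simp add: abs2_mult)
qed

lemma abs2_of_int: "n \<noteq> 0 \<Longrightarrow> abs2 (of_int n) = (1/2) ^ multiplicity 2 n"
  using v2_of_int_div[of n 1]
  by (simp add: abs2_def powr_minus powr_realpow power_one_over inverse_eq_divide)

lemma abs2_two: "abs2 2 = 1/2"
  using abs2_of_int[of 2] multiplicity_self[of "2::int"] by simp

lemma abs2_of_int_le_1: "abs2 (of_int n) \<le> 1"
  by (cases "n = 0") (simp add: abs2_def, simp add: abs2_of_int power_le_one)

lemma abs2_of_int_ge:
  assumes "\<not> 2 ^ Suc k dvd n"
  shows "abs2 (of_int n) \<ge> (1/2) ^ k"
proof -
  have "n \<noteq> 0" using assms by auto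
  moreover have "multiplicity 2 n \<le> k"
    using assms \<open>n \<noteq> 0\<close> power_dvd_iff_le_multiplicity[where p = "2::int" and n = "Suc k" and x = n]
    by simp
  ultimately show ?thesis by (simp add: abs2_of_int power_decreasing)
qed

section \<open>Zeros in $K^{10}$\<close>

lemma common_denominator:
  fixes Q :: "rat set"
  assumes "finite Q"
  obtains D :: int where "D > 0" and "\<And>q. q \<in> Q \<Longrightarrow> of_int D * q \<in> \<int>"
proof
  let ?D = "\<Prod>q\<in>Q. snd (quotient_of q)"
  show "?D > 0" by (intro prod_pos) (simp add: quotient_of_denom_pos')
  fix q assume "q \<in> Q"
  obtain n e where ne: "quotient_of q = (n, e)" by (cases "quotient_of q")
  have "snd (quotient_of q) dvd ?D" using assms \<open>q \<in> Q\<close> by (intro dvd_prodI)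
  then obtain m where D: "?D = e * m" by (auto simp: ne elim: dvdE)
  have "of_int ?D * q = of_int (m * n)"
    unfolding D using quotient_of_div[OF ne] quotient_of_denom_pos[OF ne] by (simp add: field_simps)
  then show "of_int ?D * q \<in> \<int>" by simp
qed

lemma two_power_primitive:
  fixes z :: "'i \<Rightarrow> int"
  assumes "i0 \<in> I" "z i0 \<noteq> 0"
  obtains k w where "\<And>i. i \<in> I \<Longrightarrow> z i = 2^k * w i" and "\<exists>i\<in>I. odd (w i)"
proof -
  define P where "P k \<longleftrightarrow> (\<exists>i\<in>I. \<not> 2 ^ Suc k dvd z i)" for k
  have "\<not> 2 ^ Suc (multiplicity 2 (z i0)) dvd z i0"
    using assms(2) power_dvd_iff_le_multiplicity[where p = "2::int" and x = "z i0"
      and n = "Suc (multiplicity 2 (z i0))"]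
    by simp
  then have "P (multiplicity 2 (z i0))" unfolding P_def using assms(1) by blast
  then have P: "P (LEAST k. P k)" by (rule LeastI)
  define k where "k = (LEAST k. P k)"
  have dvd: "2 ^ k dvd z i" if "i \<in> I" for i
  proof (cases k)
    case (Suc j)
    then have "\<not> P j" unfolding k_def by (metis lessI not_less_Least)
    then show ?thesis using that Suc unfolding P_def by blast
  qed simp
  show ?thesis
  proof
    show "z i = 2^k * (z i div 2^k)" if "i \<in> I" for i using dvd[OF that] by simp
    from P obtain i where "i \<in> I" "\<not> 2 ^ Suc k dvd z i" unfolding P_def k_def by blast
    moreover have "2 ^ Suc k dvd z i" if "even (z i div 2^k)"
      using that dvd[OF \<open>i \<in> I\<close>] by (auto elim!: evenE dvdE)
    ultimately show "\<exists>i\<in>I. odd (z i div 2^k)" by blast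
  qed
qed

lemma abs2_ge_if_scaled_integer:
  fixes D N :: int and q :: rat and e :: real
  assumes D: "D \<noteq> 0" and e: "e > 0" and De: "abs2 (of_int D) * e \<le> (1/2)^k"
    and q: "of_int D^4 * q = of_int ((2^k)^4 * N)" and N: "\<not> 64 dvd N"
  shows "abs2 q \<ge> e^4/32"
proof -
  have \<delta>: "abs2 (of_int D) > 0" using D by (simp add: abs2_pos)
  have "abs2 (of_int N) \<ge> 1/32" using N abs2_of_int_ge[of 5 N] by (simp add: power_one_over)
  have "abs2 (of_int D)^4 * abs2 q = ((1/2)^k)^4 * abs2 (of_int N)"
    using arg_cong[OF q, of abs2] by (simp add: abs2_mult abs2_power abs2_two power_mult_distrib)
  also have "\<dots> \<ge> (abs2 (of_int D) * e)^4 * (1/32)"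
    using De \<delta> e \<open>abs2 (of_int N) \<ge> 1/32\<close> by (intro mult_mono power_mono) auto
  finally have "abs2 (of_int D)^4 * (e^4/32) \<le> abs2 (of_int D)^4 * abs2 q"
    by (simp add: power_mult_distrib)
  then show ?thesis using \<delta> by simp
qed

lemma abs2_Fpoly_lower_bound:
  fixes d c1 c2 :: int and x :: "nat \<Rightarrow> rat \<times> rat" and e :: real
  assumes descent: "\<And>a b. 64 dvd F_fst d c1 c2 a b \<Longrightarrow> 64 dvd F_snd d c1 c2 a b \<Longrightarrow>
      \<forall>i<10. even (a i) \<and> even (b i)"
    and i0: "i0 < 10" and e: "e > 0" and big: "abs2 (fst (x i0)) \<ge> e \<or> abs2 (snd (x i0)) \<ge> e"
  shows "abs2 (fst (Fpoly (of_int d) (of_int c1, of_int c2) x)) \<ge> e^4/32 \<or>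
    abs2 (snd (Fpoly (of_int d) (of_int c1, of_int c2) x)) \<ge> e^4/32"
proof -
  let ?I = "{..<10::nat} <+> {..<10::nat}"
  let ?coord = "\<lambda>j. case j of Inl i \<Rightarrow> fst (x i) | Inr i \<Rightarrow> snd (x i)"
  obtain D :: int where D: "D > 0" and DQ: "\<And>q. q \<in> ?coord ` ?I \<Longrightarrow> of_int D * q \<in> \<int>"
    by (rule common_denominator[of "?coord ` ?I"]) auto
  define z where "z j = \<lfloor>of_int D * ?coord j\<rfloor>" for j
  have z: "of_int (z j) = of_int D * ?coord j" if "j \<in> ?I" for j
    using DQ[of "?coord j"] that by (auto simp: z_def elim!: Ints_cases)
  have "Inl i0 \<in> ?I \<and> abs2 (?coord (Inl i0)) \<ge> e \<or> Inr i0 \<in> ?I \<and> abs2 (?coord (Inr i0)) \<ge> e"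
    using big i0 by auto
  then obtain j0 where j0: "j0 \<in> ?I" and "abs2 (?coord j0) \<ge> e" by blast
  have "abs2 (of_int (z j0)) = abs2 (of_int D) * abs2 (?coord j0)"
    using z[OF j0] by (simp add: abs2_mult)
  then have De: "abs2 (of_int D) * e \<le> abs2 (of_int (z j0))"
    using \<open>abs2 (?coord j0) \<ge> e\<close> by (simp add: mult_left_mono abs2_nonneg)
  moreover have "abs2 (of_int D) * e > 0" using D e by (simp add: abs2_pos)
  ultimately have "z j0 \<noteq> 0" by (auto simp: abs2_def)
  then obtain k w where zw: "\<And>j. j \<in> ?I \<Longrightarrow> z j = 2^k * w j" and odd: "\<exists>j\<in>?I. odd (w j)"
    using two_power_primitive[OF j0] by blast
  have "abs2 (of_int (z j0)) \<le> (1/2)^k"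
    using zw[OF j0] abs2_of_int_le_1[of "w j0"]
    by (simp add: abs2_two abs2_mult abs2_power mult_left_le)
  with De have De': "abs2 (of_int D) * e \<le> (1/2)^k" by linarith
  let ?a = "\<lambda>i. w (Inl i)" and ?b = "\<lambda>i. w (Inr i)"
  have "\<not> (\<forall>i<10. even (?a i) \<and> even (?b i))" using odd by auto
  then have "\<not> 64 dvd F_fst d c1 c2 ?a ?b \<or> \<not> 64 dvd F_snd d c1 c2 ?a ?b" using descent by blast
  moreover have
    "of_int D * fst (x i) = of_int (2^k * ?a i) \<and> of_int D * snd (x i) = of_int (2^k * ?b i)"
    if "i < 10" for i
  proof -
    have "Inl i \<in> ?I" "Inr i \<in> ?I" using that by (simp_all add: InlI InrI)
    then show ?thesis using z zw by simp
  qed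
  note scaled = Fpoly_scaled_integral[OF this]
  ultimately show ?thesis
    using abs2_ge_if_scaled_integer[OF _ e De' scaled(1)] abs2_ge_if_scaled_integer[OF _ e De' scaled(2)] D
    by auto
qed

lemma not_has_nontrivial_zero:
  fixes d c1 c2 :: int
  assumes descent: "\<And>a b. 64 dvd F_fst d c1 c2 a b \<Longrightarrow> 64 dvd F_snd d c1 c2 a b \<Longrightarrow>
      \<forall>i<10. even (a i) \<and> even (b i)"
  shows "\<not> has_nontrivial_zero (of_int d) (of_int c1, of_int c2)"
proof
  let ?F = "Fpoly (of_int d) (of_int c1, of_int c2)"
  assume "has_nontrivial_zero (of_int d) (of_int c1, of_int c2)"
  then obtain X i0 where i0: "i0 < 10" and nonzero: "\<not> Knull (X i0)"
    and zero: "Knull (\<lambda>n. ?F (\<lambda>i. X i n))"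
    unfolding has_nontrivial_zero_def by blast
  from nonzero obtain e where e: "e > 0"
    and big: "\<And>N. \<exists>n\<ge>N. abs2 (fst (X i0 n)) \<ge> e \<or> abs2 (snd (X i0 n)) \<ge> e"
    unfolding Knull_def null2_def by (auto simp: not_less) blast+
  have "e^4/32 > 0" using e by simp
  then obtain N1 N2 where
    N1: "\<And>n. n \<ge> N1 \<Longrightarrow> abs2 (fst (?F (\<lambda>i. X i n))) < e^4/32" and
    N2: "\<And>n. n \<ge> N2 \<Longrightarrow> abs2 (snd (?F (\<lambda>i. X i n))) < e^4/32"
    using zero unfolding Knull_def null2_def by meson
  obtain n where n: "n \<ge> max N1 N2" and "abs2 (fst (X i0 n)) \<ge> e \<or> abs2 (snd (X i0 n)) \<ge> e"
    using big by blast
  then have "abs2 (fst (?F (\<lambda>i. X i n))) \<ge> e^4/32 \<or> abs2 (snd (?F (\<lambda>i. X i n))) \<ge> e^4/32"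
    by (intro abs2_Fpoly_lower_bound[OF descent i0 e])
  then show False using N1[of n] N2[of n] n by linarith
qed

theorem mainTheorem2:
  shows "\<not> has_nontrivial_zero 2 kpi \<and> \<not> has_nontrivial_zero 10 kpi \<and>
         \<not> has_nontrivial_zero (-2) (kadd kpi (kmul (-2) kpi kpi)) \<and>
         \<not> has_nontrivial_zero (-10) (kadd kpi (kmul (-10) kpi kpi))"
proof -
  have pos: "\<not> has_nontrivial_zero (of_int d) (of_int 0, of_int 1)" if "d = 2 \<or> d = 10" for d
    using F_pos_coords_even[OF that] by (rule not_has_nontrivial_zero)
  have neg: "\<not> has_nontrivial_zero (of_int d) (of_int d, of_int 1)" if "d = -2 \<or> d = -10" for d
    using F_neg_coords_even[OF that] by (rule not_has_nontrivial_zero)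
  have "kpi = (0, 1)" "kadd kpi (kmul d kpi kpi) = (d, 1)" for d :: rat
    by (simp_all add: kpi_def kadd_def kmul_def)
  then show ?thesis using pos[of 2] pos[of 10] neg[of "-2"] neg[of "-10"] by simp
qed

end
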